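(* Fix a scenario $v$, costs $c_i>0$, and let $\beta_i=c_i+v_i$. For each box $i\in[n]$ consider two Poisson processes of arrivals of box $i$, a good one with rate $\lambda_i^g(\tau)\ge 0$ and a bad one with rate $\lambda_i^b(\tau)\ge 0$ at time $\tau>0$, all $2n$ processes mutually independent. Suppose $$\sum_{i\in[n]}\lambda_i^g(\tau)\le\frac{2}{\tau}\quad\text{for all }\tau>0.$$ For a given arrival process, let $\alpha_i$ be the first arrival time of box $i$, $\tau_i=\max\{\alpha_i,\beta_i\}$, $\tau^*=\min_i\tau_i$, $i^*=\arg\min_i\tau_i$, and $Q=\tau^*+\beta_{i^*}$. Let $Q^{g+b}$ be this quantity when arrivals of box $i$ are those of both its good and bad processes combined, and $Q^{g}$ the quantity when only the good arrivals are used. Then $\mathbf{E}[Q^{g+b}]\le\mathbf{E}[Q^{g}]$.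
   Context: Ties among arrival/stopping times are zero-probability events and are ignored. The quantity $\tau^*+\beta_{i^*}$ is the upper bound on the expected objective of the Balanced Stopping rule (which stops at time $\tau^*$ and takes box $i^*$) for the Correlated Pandora's Problem, where box $i$ has opening cost $c_i$ and volume $v_i$. *)

theory Defs
  imports "HOL-Probability.Probability"
begin

definition cum_rate :: "(real \<Rightarrow> real) \<Rightarrow> real \<Rightarrow> ennreal" where
  "cum_rate lam t = (\<integral>\<^sup>+ s. ennreal (lam s) * indicator {0<..t} s \<partial>lborel)"

definition exp_neg :: "ennreal \<Rightarrow> ennreal" where
  "exp_neg L = (if L = \<infinity> then 0 else ennreal (exp (- enn2real L)))"

text \<open>X (with values in [0, infinity]; infinity = no arrival) is distributed as the first
  arrival time of a Poisson process on (0, infinity) with rate function lam.\<close>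
definition first_arrival_time :: "'a measure \<Rightarrow> (real \<Rightarrow> real) \<Rightarrow> ('a \<Rightarrow> ennreal) \<Rightarrow> bool" where
  "first_arrival_time M lam X \<longleftrightarrow> X \<in> borel_measurable M \<and>
     (\<forall>t>0. emeasure M {\<omega> \<in> space M. ennreal t < X \<omega>} = exp_neg (cum_rate lam t))"

definition rate_fun :: "(real \<Rightarrow> real) \<Rightarrow> bool" where
  "rate_fun lam \<longleftrightarrow> lam \<in> borel_measurable borel \<and> (\<forall>t>0. lam t \<ge> 0) \<and>
     (\<forall>a b. 0 < a \<longrightarrow> a \<le> b \<longrightarrow> set_integrable lborel {a..b} lam)"

definition stop_Q :: "nat \<Rightarrow> (nat \<Rightarrow> real) \<Rightarrow> (nat \<Rightarrow> ennreal) \<Rightarrow> ennreal" where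
  "stop_Q n \<beta> \<alpha> =
     (let \<tau> = (\<lambda>i. max (\<alpha> i) (ennreal (\<beta> i)));
          istar = arg_min_on \<tau> {..<n}
      in \<tau> istar + ennreal (\<beta> istar))"

end

theory Submission
  imports Defs
begin

(*
  The bad arrivals are independent of the good ones, so it suffices to show that capping the good
  arrival times at arbitrary deterministic times y_i does not increase E[Q]. Let D be the smallest
  capped box time min_i max(y_i, beta_i). The cap changes Q only on the event that every box time
  tau_i is at least D, and there it makes Q at most 2 D; so we need E[Q; all tau_i >= D] >= 2 D
  times the probability of that event.

  Split the event according to the set A of boxes with beta_i >= D whose first arrival comes by
  beta_i, and let b = min_{i in A} beta_i. On each piece, tau* is at least D plus the time in
  (D, b) before some box stops, and beta_{i*} >= b if no box outside A has stopped by b. By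
  independence and the rate bound sum_i lambda_i(s) <= 2 / s, given the piece, no further box stops
  before s with probability at least (D/s)^2. Hence E[Q] on the piece is at least
  D + int_D^b (D/s)^2 ds + b (D/b)^2 = 2 D times its probability.
*)

section \<open>Exponential survival bounds\<close>

lemma exp_neg_ennreal: "0 \<le> r \<Longrightarrow> exp_neg (ennreal r) = ennreal (exp (- r))"
  by (simp add: exp_neg_def)

lemma exp_neg_add: "exp_neg (a + b) = exp_neg a * exp_neg b"
proof (cases "a = \<infinity> \<or> b = \<infinity>")
  case False
  then obtain a' b' where "a = ennreal a'" "b = ennreal b'" "0 \<le> a'" "0 \<le> b'"
    by (cases a rule: ennreal_cases; cases b rule: ennreal_cases) auto
  moreover have "exp (- (a' + b')) = exp (- a') * exp (- b')"
    by (simp add: exp_add[symmetric])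
  ultimately show ?thesis
    by (simp add: exp_neg_ennreal ennreal_mult del: ennreal_plus add: ennreal_plus[symmetric])
qed (auto simp: exp_neg_def)

lemma exp_neg_zero [simp]: "exp_neg 0 = 1"
  by (simp add: exp_neg_def)

lemma exp_neg_sum: "finite I \<Longrightarrow> exp_neg (\<Sum>i\<in>I. f i) = (\<Prod>i\<in>I. exp_neg (f i))"
  by (induction I rule: finite_induct) (simp_all add: exp_neg_add)

lemma exp_neg_antimono: "a \<le> b \<Longrightarrow> exp_neg b \<le> exp_neg a"
  by (cases a rule: ennreal_cases; cases b rule: ennreal_cases) (auto simp: exp_neg_def top_unique)

lemma exp_neg_le_1: "exp_neg a \<le> 1"
  using exp_neg_antimono[of 0 a] by simp

definition cum_rate_on :: "(real \<Rightarrow> real) \<Rightarrow> real \<Rightarrow> real \<Rightarrow> ennreal" where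
  "cum_rate_on lam a b = (\<integral>\<^sup>+ s. ennreal (lam s) * indicator {a<..b} s \<partial>lborel)"

lemma cum_rate_add_cum_rate_on:
  assumes [measurable]: "lam \<in> borel_measurable borel" and "0 \<le> a" "a \<le> b"
  shows "cum_rate lam b = cum_rate lam a + cum_rate_on lam a b"
proof -
  have "indicator {0<..b} s = (indicator {0<..a} s + indicator {a<..b} s :: ennreal)" for s
    using assms by (auto simp: indicator_def)
  then show ?thesis
    unfolding cum_rate_def cum_rate_on_def by (simp add: distrib_left nn_integral_add)
qed

lemma cum_rate_on_mono: "a \<le> a' \<Longrightarrow> b' \<le> b \<Longrightarrow> cum_rate_on lam a' b' \<le> cum_rate_on lam a b"
  unfolding cum_rate_on_def by (intro nn_integral_mono) (auto simp: indicator_def)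

lemma cum_rate_on_empty: "b \<le> a \<Longrightarrow> cum_rate_on lam a b = 0"
  unfolding cum_rate_on_def by (simp add: indicator_def)

lemma sum_cum_rate_on_le_ln:
  assumes meas: "\<And>i. i \<in> I \<Longrightarrow> lam i \<in> borel_measurable borel"
    and nonneg: "\<And>i t. i \<in> I \<Longrightarrow> 0 < t \<Longrightarrow> 0 \<le> lam i t"
    and rate_le: "\<And>t. 0 < t \<Longrightarrow> (\<Sum>i\<in>I. lam i t) \<le> 2 / t"
    and "0 < a" "a \<le> b"
  shows "(\<Sum>i\<in>I. cum_rate_on (lam i) a b) \<le> ennreal (2 * ln b - 2 * ln a)"
proof -
  have "(\<Sum>i\<in>I. cum_rate_on (lam i) a b)
      = (\<integral>\<^sup>+ s. (\<Sum>i\<in>I. ennreal (lam i s) * indicator {a<..b} s) \<partial>lborel)"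
    unfolding cum_rate_on_def using meas by (subst nn_integral_sum) auto
  also have "\<dots> \<le> (\<integral>\<^sup>+ s. ennreal (2 / s) * indicator {a..b} s \<partial>lborel)"
  proof (intro nn_integral_mono)
    fix s :: real
    show "(\<Sum>i\<in>I. ennreal (lam i s) * indicator {a<..b} s) \<le> ennreal (2 / s) * indicator {a..b} s"
    proof (cases "s \<in> {a<..b}")
      case True
      then have "(\<Sum>i\<in>I. ennreal (lam i s) * indicator {a<..b} s) = ennreal (\<Sum>i\<in>I. lam i s)"
        using \<open>0 < a\<close> nonneg by (simp add: sum_ennreal)
      also have "\<dots> \<le> ennreal (2 / s)"
        using True \<open>0 < a\<close> rate_le by (intro ennreal_leI) simp
      finally show ?thesis using True by simp
    qed simp
  qed
  also have "\<dots> = ennreal (2 * ln b - 2 * ln a)"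
    using \<open>0 < a\<close> \<open>a \<le> b\<close>
    by (intro nn_integral_FTC_Icc) (auto intro!: derivative_eq_intros)
  finally show ?thesis .
qed

lemma exp_neg_ge_ratio_squared:
  assumes "L \<le> ennreal (2 * ln b - 2 * ln a)" "0 < a" "a \<le> b"
  shows "ennreal ((a / b)\<^sup>2) \<le> exp_neg L"
proof -
  have "- (2 * ln b - 2 * ln a) = ln ((a / b)\<^sup>2)"
    using assms by (simp add: ln_realpow ln_div)
  then have "exp (- (2 * ln b - 2 * ln a)) = (a / b)\<^sup>2"
    using assms by simp
  moreover have "0 \<le> 2 * ln b - 2 * ln a"
    using assms by simp
  ultimately show ?thesis
    using exp_neg_antimono[OF assms(1)] by (simp add: exp_neg_ennreal)
qed

section \<open>Integration and independence\<close>

lemma ennreal_add_emeasure_Ico_le: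
  fixes a :: real and m :: ennreal
  assumes "ennreal a \<le> m" "0 \<le> a"
  shows "ennreal a + emeasure lborel {s. a \<le> s \<and> ennreal s < m} \<le> m"
proof (cases m rule: ennreal_cases)
  case (real r)
  then have "{s. a \<le> s \<and> ennreal s < m} = {a..<r}"
    using assms by (auto simp: ennreal_less_iff)
  with real assms show ?thesis
    by (simp add: ennreal_plus[symmetric] del: ennreal_plus)
qed simp

lemma ennreal_twice_eq_split:
  fixes d b :: real
  assumes "0 < d" "d \<le> b"
  shows "ennreal (2 * d) = ennreal d + ennreal (d - d\<^sup>2 / b) + ennreal (d\<^sup>2 / b)"
proof -
  have "d\<^sup>2 / b \<le> d"
    using assms by (simp add: power2_eq_square pos_divide_le_eq mult_left_mono)
  then have nonneg: "0 \<le> d - d\<^sup>2 / b" "0 \<le> d\<^sup>2 / b"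
    using assms by simp_all
  have "ennreal (2 * d) = ennreal ((d + (d - d\<^sup>2 / b)) + d\<^sup>2 / b)"
    by (rule arg_cong[where f = ennreal]) simp
  also have "\<dots> = ennreal (d + (d - d\<^sup>2 / b)) + ennreal (d\<^sup>2 / b)"
    using nonneg assms by (intro ennreal_plus) auto
  also have "\<dots> = ennreal d + ennreal (d - d\<^sup>2 / b) + ennreal (d\<^sup>2 / b)"
    using nonneg assms by (subst ennreal_plus) auto
  finally show ?thesis .
qed

lemma nn_integral_le_by_event:
  assumes [measurable]: "E \<in> sets M" "g \<in> borel_measurable M"
    and off_E: "\<And>x. x \<in> space M - E \<Longrightarrow> f x \<le> g x"
    and on_E: "\<And>x. x \<in> E \<Longrightarrow> f x \<le> c"
    and mean_on_E: "c * emeasure M E \<le> (\<integral>\<^sup>+x. g x * indicator E x \<partial>M)"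
  shows "(\<integral>\<^sup>+x. f x \<partial>M) \<le> (\<integral>\<^sup>+x. g x \<partial>M)"
proof -
  have "(\<integral>\<^sup>+x. f x \<partial>M) \<le> (\<integral>\<^sup>+x. g x * indicator (space M - E) x + c * indicator E x \<partial>M)"
    using off_E on_E by (intro nn_integral_mono) (auto simp: indicator_def)
  also have "\<dots> = (\<integral>\<^sup>+x. g x * indicator (space M - E) x \<partial>M) + c * emeasure M E"
    by (simp add: nn_integral_add nn_integral_cmult_indicator)
  also have "\<dots> \<le> (\<integral>\<^sup>+x. g x * indicator (space M - E) x \<partial>M) + (\<integral>\<^sup>+x. g x * indicator E x \<partial>M)"
    using mean_on_E by (rule add_left_mono)
  also have "\<dots> = (\<integral>\<^sup>+x. g x * indicator (space M - E) x + g x * indicator E x \<partial>M)"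
    by (simp add: nn_integral_add)
  also have "\<dots> = (\<integral>\<^sup>+x. g x \<partial>M)"
    by (intro nn_integral_cong) (auto simp: indicator_def)
  finally show ?thesis .
qed

lemma (in prob_space) indep_sets_reindex:
  assumes "indep_sets F (f ` I)" "inj_on f I"
  shows "indep_sets (\<lambda>i. F (f i)) I"
  unfolding indep_sets_def
proof (intro conjI ballI allI impI)
  show "F (f i) \<subseteq> events" if "i \<in> I" for i
    using assms(1) that by (simp add: indep_sets_def)
  fix J A assume J: "J \<subseteq> I" "J \<noteq> {}" "finite J" and A: "A \<in> (\<Pi> j\<in>J. F (f j))"
  define A' where "A' = (\<lambda>k. A (the_inv_into J f k))"
  have inj: "inj_on f J" using assms(2) J(1) by (rule inj_on_subset)
  have A'f: "A' (f j) = A j" if "j \<in> J" for j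
    using inj that by (simp add: A'_def the_inv_into_f_f)
  have "prob (\<Inter>k\<in>f ` J. A' k) = (\<Prod>k\<in>f ` J. prob (A' k))"
    using A A'f J by (intro indep_setsD[OF assms(1)]) auto
  then show "prob (\<Inter>j\<in>J. A j) = (\<Prod>j\<in>J. prob (A j))"
    using inj A'f by (simp add: prod.reindex)
qed

lemma (in prob_space) indep_vars_reindex:
  assumes "indep_vars M' X (f ` I)" "inj_on f I"
  shows "indep_vars (\<lambda>i. M' (f i)) (\<lambda>i. X (f i)) I"
  using assms indep_sets_reindex[of "\<lambda>i. {X i -` A \<inter> space M | A. A \<in> sets (M' i)}" f I]
  unfolding indep_vars_def2 by auto

lemma (in prob_space) nn_integral_indep_var_le:
  assumes ind: "indep_var S X T Y" and f [measurable]: "f \<in> borel_measurable (S \<Otimes>\<^sub>M T)"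
    and bound: "\<And>y. y \<in> space T \<Longrightarrow> (\<integral>\<^sup>+\<omega>. f (X \<omega>, y) \<partial>M) \<le> C"
  shows "(\<integral>\<^sup>+\<omega>. f (X \<omega>, Y \<omega>) \<partial>M) \<le> C"
proof -
  have X [measurable]: "X \<in> measurable M S" and Y [measurable]: "Y \<in> measurable M T"
    and distr_pair: "distr M S X \<Otimes>\<^sub>M distr M T Y = distr M (S \<Otimes>\<^sub>M T) (\<lambda>\<omega>. (X \<omega>, Y \<omega>))"
    using ind unfolding indep_var_distribution_eq by auto
  interpret PX: prob_space "distr M S X" by (rule prob_space_distr) simp
  interpret PY: prob_space "distr M T Y" by (rule prob_space_distr) simp
  interpret pair_prob_space "distr M S X" "distr M T Y" ..
  have "(\<integral>\<^sup>+\<omega>. f (X \<omega>, Y \<omega>) \<partial>M) = (\<integral>\<^sup>+p. f p \<partial>(distr M S X \<Otimes>\<^sub>M distr M T Y))"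
    by (simp add: distr_pair nn_integral_distr)
  also have "\<dots> = (\<integral>\<^sup>+y. (\<integral>\<^sup>+x. f (x, y) \<partial>distr M S X) \<partial>distr M T Y)"
    by (rule nn_integral_snd[symmetric]) simp
  also have "\<dots> \<le> (\<integral>\<^sup>+y. C \<partial>distr M T Y)"
  proof (intro nn_integral_mono)
    fix y assume "y \<in> space (distr M T Y)"
    then have "(\<lambda>x. f (x, y)) \<in> borel_measurable S"
      by (intro measurable_compose[OF measurable_Pair2' f]) simp
    with bound \<open>y \<in> space (distr M T Y)\<close> show "(\<integral>\<^sup>+x. f (x, y) \<partial>distr M S X) \<le> C"
      by (simp add: nn_integral_distr)
  qed
  also have "\<dots> = C"
    using PY.emeasure_space_1 by simp
  finally show ?thesis .
qed

section \<open>The balanced stopping rule\<close>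

definition box_time :: "(nat \<Rightarrow> real) \<Rightarrow> (nat \<Rightarrow> ennreal) \<Rightarrow> nat \<Rightarrow> ennreal" where
  "box_time \<beta> \<alpha> i = max (\<alpha> i) (ennreal (\<beta> i))"

definition stop_box :: "nat \<Rightarrow> (nat \<Rightarrow> real) \<Rightarrow> (nat \<Rightarrow> ennreal) \<Rightarrow> nat" where
  "stop_box n \<beta> \<alpha> = arg_min_on (box_time \<beta> \<alpha>) {..<n}"

(* arg_min_on breaks ties by SOME: the stopped box depends on the arrivals only through the finite
   set of minimising boxes, which is what makes it measurable. *)
definition min_boxes :: "nat \<Rightarrow> (nat \<Rightarrow> real) \<Rightarrow> (nat \<Rightarrow> ennreal) \<Rightarrow> nat set" where
  "min_boxes n \<beta> \<alpha> = {k. k < n \<and> box_time \<beta> \<alpha> k = Min (box_time \<beta> \<alpha> ` {..<n})}"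

lemma stop_Q_eq: "stop_Q n \<beta> \<alpha> = box_time \<beta> \<alpha> (stop_box n \<beta> \<alpha>) + ennreal (\<beta> (stop_box n \<beta> \<alpha>))"
  unfolding stop_Q_def stop_box_def Let_def box_time_def[abs_def] by simp

lemma stop_box_eq_SOME: "stop_box n \<beta> \<alpha> = (SOME k. k \<in> min_boxes n \<beta> \<alpha>)"
  unfolding stop_box_def min_boxes_def by (subst arg_min_SOME_Min) auto

lemma min_boxes_nonempty:
  assumes "1 \<le> n" shows "min_boxes n \<beta> \<alpha> \<noteq> {}"
proof -
  have "Min (box_time \<beta> \<alpha> ` {..<n}) \<in> box_time \<beta> \<alpha> ` {..<n}"
    using assms by (intro Min_in) (auto simp: lessThan_empty_iff)
  then show ?thesis
    by (auto simp: min_boxes_def)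
qed

lemma stop_box_less:
  assumes "1 \<le> n" shows "stop_box n \<beta> \<alpha> < n"
proof -
  have "{..<n} \<noteq> {}"
    using assms by (auto simp: lessThan_empty_iff)
  then show ?thesis
    using arg_min_if_finite(1)[OF finite_lessThan] by (simp add: stop_box_def)
qed

lemma box_time_stop_box_le: "j < n \<Longrightarrow> box_time \<beta> \<alpha> (stop_box n \<beta> \<alpha>) \<le> box_time \<beta> \<alpha> j"
  using arg_min_least[of "{..<n}" j "box_time \<beta> \<alpha>"] by (auto simp: stop_box_def)

lemma stop_Q_cong:
  assumes "\<And>i. i < n \<Longrightarrow> \<alpha> i = \<alpha>' i" "1 \<le> n"
  shows "stop_Q n \<beta> \<alpha> = stop_Q n \<beta> \<alpha>'"
proof -
  have "box_time \<beta> \<alpha> ` {..<n} = box_time \<beta> \<alpha>' ` {..<n}"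
    using assms(1) by (auto simp: box_time_def)
  then have "min_boxes n \<beta> \<alpha> = min_boxes n \<beta> \<alpha>'"
    using assms(1) by (auto simp: min_boxes_def box_time_def)
  then have "stop_box n \<beta> \<alpha> = stop_box n \<beta> \<alpha>'"
    by (simp add: stop_box_eq_SOME)
  then show ?thesis
    using assms stop_box_less[of n \<beta> \<alpha>'] by (simp add: stop_Q_eq box_time_def)
qed

lemma measurable_min_boxes:
  assumes meas [measurable]: "\<And>i. i < n \<Longrightarrow> (\<lambda>\<omega>. \<alpha> i \<omega>) \<in> borel_measurable N" and "1 \<le> n"
  shows "(\<lambda>\<omega>. min_boxes n \<beta> (\<lambda>i. \<alpha> i \<omega>)) \<in> measurable N (count_space (Pow {..<n} - {{}}))"
  unfolding measurable_count_space_eq_countable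
    [OF countable_finite[OF finite_Diff[OF finite_Pow_iff[THEN iffD2, OF finite_lessThan]]]]
proof (intro conjI ballI)
  show "(\<lambda>\<omega>. min_boxes n \<beta> (\<lambda>i. \<alpha> i \<omega>)) \<in> space N \<rightarrow> Pow {..<n} - {{}}"
    using min_boxes_nonempty[OF \<open>1 \<le> n\<close>] by (auto simp: min_boxes_def)
  fix T assume "T \<in> Pow {..<n} - {{}}"
  then have "(\<lambda>\<omega>. min_boxes n \<beta> (\<lambda>i. \<alpha> i \<omega>)) -` {T} \<inter> space N
      = {\<omega> \<in> space N. \<forall>k<n. k \<in> T \<longleftrightarrow>
           box_time \<beta> (\<lambda>i. \<alpha> i \<omega>) k = Min ((\<lambda>j. box_time \<beta> (\<lambda>i. \<alpha> i \<omega>) j) ` {..<n})}"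
    by (auto simp: min_boxes_def)
  also have "\<dots> \<in> sets N"
    unfolding box_time_def by measurable
  finally show "(\<lambda>\<omega>. min_boxes n \<beta> (\<lambda>i. \<alpha> i \<omega>)) -` {T} \<inter> space N \<in> sets N" .
qed

lemma stop_Q_measurable:
  assumes meas [measurable]: "\<And>i. i < n \<Longrightarrow> (\<lambda>\<omega>. \<alpha> i \<omega>) \<in> borel_measurable N" and "1 \<le> n"
  shows "(\<lambda>\<omega>. stop_Q n \<beta> (\<lambda>i. \<alpha> i \<omega>)) \<in> borel_measurable N"
proof -
  have "(\<lambda>\<omega>. box_time \<beta> (\<lambda>i. \<alpha> i \<omega>) (SOME k. k \<in> T) + ennreal (\<beta> (SOME k. k \<in> T)))
      \<in> borel_measurable N" if "T \<in> Pow {..<n} - {{}}" for T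
  proof -
    have "(SOME k. k \<in> T) < n"
      using that some_in_eq[of T] by auto
    then show ?thesis
      unfolding box_time_def by measurable
  qed
  then show ?thesis
    unfolding stop_Q_eq stop_box_eq_SOME
    by (rule measurable_compose_countable'[OF _ measurable_min_boxes[OF meas \<open>1 \<le> n\<close>]])
      (simp_all add: countable_finite)
qed

lemma box_time_min: "box_time \<beta> (\<lambda>i. min (x i) (y i)) i = min (box_time \<beta> x i) (box_time \<beta> y i)"
  by (simp add: box_time_def max_min_distrib1)

lemma stop_Q_le_box_time: "j < n \<Longrightarrow> stop_Q n \<beta> \<alpha> \<le> 2 * box_time \<beta> \<alpha> j"
proof -
  assume "j < n"
  have "ennreal (\<beta> (stop_box n \<beta> \<alpha>)) \<le> box_time \<beta> \<alpha> (stop_box n \<beta> \<alpha>)"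
    by (simp add: box_time_def)
  with box_time_stop_box_le[OF \<open>j < n\<close>] show ?thesis
    unfolding stop_Q_eq mult_2 by (meson add_mono order_trans)
qed

lemma stop_Q_min_eq:
  fixes x y :: "nat \<Rightarrow> ennreal"
  assumes "j < n" "\<And>i. i < n \<Longrightarrow> box_time \<beta> x j < box_time \<beta> y i"
  shows "stop_Q n \<beta> (\<lambda>i. min (x i) (y i)) = stop_Q n \<beta> x"
proof -
  define m where "m = Min (box_time \<beta> x ` {..<n})"
  have "m \<le> box_time \<beta> x j"
    using \<open>j < n\<close> by (simp add: m_def)
  then have m_less: "m < box_time \<beta> y i" if "i < n" for i
    using assms(2)[OF that] by simp
  have capped_eq_iff: "min (box_time \<beta> x i) (box_time \<beta> y i) = m \<longleftrightarrow> box_time \<beta> x i = m"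
    if "i < n" for i
    using m_less[OF that] by (auto simp: min_def)
  have m_le: "m \<le> min (box_time \<beta> x i) (box_time \<beta> y i)" if "i < n" for i
    using m_less[OF that] that by (simp add: m_def less_imp_le)
  have "m \<in> box_time \<beta> x ` {..<n}"
    unfolding m_def using \<open>j < n\<close> by (intro Min_in) auto
  then have "m \<in> box_time \<beta> (\<lambda>i. min (x i) (y i)) ` {..<n}"
    using capped_eq_iff by (force simp: box_time_min)
  then have "Min (box_time \<beta> (\<lambda>i. min (x i) (y i)) ` {..<n}) = m"
    using capped_eq_iff m_le by (intro Min_eqI) (auto simp: box_time_min)
  then have "min_boxes n \<beta> (\<lambda>i. min (x i) (y i)) = min_boxes n \<beta> x"
    using capped_eq_iff by (auto simp: min_boxes_def box_time_min m_def)
  then have "stop_box n \<beta> (\<lambda>i. min (x i) (y i)) = stop_box n \<beta> x"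
    by (simp add: stop_box_eq_SOME)
  moreover have "m = box_time \<beta> x (stop_box n \<beta> x)"
    unfolding m_def using \<open>j < n\<close> stop_box_less[of n \<beta> x]
    by (intro Min_eqI) (auto intro: box_time_stop_box_le)
  ultimately show ?thesis
    using m_less[OF stop_box_less[of n \<beta> x]] \<open>j < n\<close> unfolding stop_Q_eq box_time_min
    by simp
qed

section \<open>The arrival model\<close>

locale arrival_model = prob_space M for M :: "'a measure" +
  fixes n :: nat and \<beta> :: "nat \<Rightarrow> real" and lam :: "nat \<Rightarrow> real \<Rightarrow> real"
    and \<alpha> :: "nat \<Rightarrow> 'a \<Rightarrow> ennreal"
  assumes n_ge_1: "1 \<le> n"
    and beta_pos: "\<And>i. i < n \<Longrightarrow> 0 < \<beta> i"
    and rate_fun_lam: "\<And>i. i < n \<Longrightarrow> rate_fun (lam i)"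
    and arrival_distr: "\<And>i. i < n \<Longrightarrow> first_arrival_time M (lam i) (\<alpha> i)"
    and sum_rate_le: "\<And>t. 0 < t \<Longrightarrow> (\<Sum>i<n. lam i t) \<le> 2 / t"
    and indep_arrivals: "indep_vars (\<lambda>_. borel) \<alpha> {..<n}"
begin

lemma measurable_arrival: "i < n \<Longrightarrow> \<alpha> i \<in> borel_measurable M"
  using arrival_distr by (simp add: first_arrival_time_def)

lemma emeasure_arrival_after:
  "i < n \<Longrightarrow> 0 < t \<Longrightarrow> emeasure M {\<omega> \<in> space M. ennreal t < \<alpha> i \<omega>} = exp_neg (cum_rate (lam i) t)"
  using arrival_distr by (simp add: first_arrival_time_def)

lemma emeasure_arrival_after_split:
  assumes "i < n" "0 < a" "a \<le> b"
  shows "emeasure M {\<omega> \<in> space M. ennreal b < \<alpha> i \<omega>}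
    = exp_neg (cum_rate_on (lam i) a b) * emeasure M {\<omega> \<in> space M. ennreal a < \<alpha> i \<omega>}"
proof -
  have "lam i \<in> borel_measurable borel"
    using rate_fun_lam[OF \<open>i < n\<close>] by (simp add: rate_fun_def)
  then have "cum_rate (lam i) b = cum_rate (lam i) a + cum_rate_on (lam i) a b"
    using assms by (intro cum_rate_add_cum_rate_on) auto
  then show ?thesis
    using assms by (simp add: emeasure_arrival_after exp_neg_add mult.commute)
qed

lemma exp_neg_mul_emeasure_le_arrival_after:
  assumes "i < n" "0 < a" "a \<le> b" "cum_rate_on (lam i) a b \<le> L"
    and "E \<subseteq> {\<omega> \<in> space M. ennreal a < \<alpha> i \<omega>}"
  shows "exp_neg L * emeasure M E \<le> emeasure M {\<omega> \<in> space M. ennreal b < \<alpha> i \<omega>}"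
proof -
  have [measurable]: "\<alpha> i \<in> borel_measurable M"
    using measurable_arrival[OF \<open>i < n\<close>] .
  have "{\<omega> \<in> space M. ennreal a < \<alpha> i \<omega>} \<in> sets M"
    by measurable
  with exp_neg_antimono[OF assms(4)] emeasure_mono[OF assms(5)]
  have "exp_neg L * emeasure M E
      \<le> exp_neg (cum_rate_on (lam i) a b) * emeasure M {\<omega> \<in> space M. ennreal a < \<alpha> i \<omega>}"
    by (intro mult_mono) simp_all
  also have "\<dots> = emeasure M {\<omega> \<in> space M. ennreal b < \<alpha> i \<omega>}"
    by (rule emeasure_arrival_after_split[OF assms(1-3), symmetric])
  finally show ?thesis .
qed

lemma arrivals_in_eq_INT:
  "{\<omega> \<in> space M. \<forall>i<n. \<alpha> i \<omega> \<in> B i} = (\<Inter>i\<in>{..<n}. \<alpha> i -` B i \<inter> space M)"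
  using n_ge_1 by (auto simp: lessThan_empty_iff)

lemma sets_arrivals_in:
  "(\<And>i. i < n \<Longrightarrow> B i \<in> sets borel) \<Longrightarrow> {\<omega> \<in> space M. \<forall>i<n. \<alpha> i \<omega> \<in> B i} \<in> sets M"
  unfolding arrivals_in_eq_INT using n_ge_1 measurable_arrival
  by (intro sets.finite_INT) (auto simp: lessThan_empty_iff)

lemma emeasure_arrivals_in:
  assumes "\<And>i. i < n \<Longrightarrow> B i \<in> sets borel"
  shows "emeasure M {\<omega> \<in> space M. \<forall>i<n. \<alpha> i \<omega> \<in> B i}
    = (\<Prod>i<n. emeasure M {\<omega> \<in> space M. \<alpha> i \<omega> \<in> B i})"
proof -
  have "prob (\<Inter>i\<in>{..<n}. \<alpha> i -` B i \<inter> space M) = (\<Prod>i<n. prob (\<alpha> i -` B i \<inter> space M))"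
    using n_ge_1 assms by (intro indep_varsD_finite[OF indep_arrivals]) (auto simp: lessThan_empty_iff)
  moreover have "\<alpha> i -` B i \<inter> space M = {\<omega> \<in> space M. \<alpha> i \<omega> \<in> B i}" for i
    by auto
  ultimately show ?thesis
    unfolding arrivals_in_eq_INT by (simp add: emeasure_eq_measure prod_ennreal)
qed

end

section \<open>Arrival patterns above a threshold\<close>

locale arrival_threshold = arrival_model +
  fixes D :: real
  assumes D_pos: "0 < D"
begin

(* On pattern A every box time is at least D, and A is the set of boxes with beta_i >= D that
   arrive by beta_i. *)
definition in_pattern :: "nat set \<Rightarrow> nat \<Rightarrow> ennreal \<Rightarrow> bool" where
  "in_pattern A i x \<longleftrightarrow>
     (if \<beta> i < D then ennreal D \<le> x else if i \<in> A then x \<le> ennreal (\<beta> i) else ennreal (\<beta> i) < x)"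

definition in_pattern_after :: "nat set \<Rightarrow> real \<Rightarrow> nat \<Rightarrow> ennreal \<Rightarrow> bool" where
  "in_pattern_after A s i x \<longleftrightarrow>
     (if \<beta> i < D then ennreal s < x else if i \<in> A then x \<le> ennreal (\<beta> i) else ennreal (max (\<beta> i) s) < x)"

definition pattern :: "nat set \<Rightarrow> 'a set" where
  "pattern A = {\<omega> \<in> space M. \<forall>i<n. in_pattern A i (\<alpha> i \<omega>)}"

definition pattern_after :: "nat set \<Rightarrow> real \<Rightarrow> 'a set" where
  "pattern_after A s = {\<omega> \<in> space M. \<forall>i<n. in_pattern_after A s i (\<alpha> i \<omega>)}"

lemma sets_in_pattern: "{x. in_pattern A i x} \<in> sets borel"
proof -
  have "{x. in_pattern A i x} = {x \<in> space borel. in_pattern A i x}"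
    by simp
  also have "\<dots> \<in> sets borel"
    unfolding in_pattern_def by measurable
  finally show ?thesis .
qed

lemma sets_in_pattern_after: "{x. in_pattern_after A s i x} \<in> sets borel"
proof -
  have "{x. in_pattern_after A s i x} = {x \<in> space borel. in_pattern_after A s i x}"
    by simp
  also have "\<dots> \<in> sets borel"
    unfolding in_pattern_after_def by measurable
  finally show ?thesis .
qed

lemma sets_pattern: "pattern A \<in> sets M"
proof -
  have "{\<omega> \<in> space M. \<forall>i<n. \<alpha> i \<omega> \<in> {x. in_pattern A i x}} \<in> sets M"
    by (rule sets_arrivals_in) (rule sets_in_pattern)
  then show ?thesis
    unfolding pattern_def mem_Collect_eq .
qed

lemma sets_pattern_after: "pattern_after A s \<in> sets M"
proof -
  have "{\<omega> \<in> space M. \<forall>i<n. \<alpha> i \<omega> \<in> {x. in_pattern_after A s i x}} \<in> sets M"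
    by (rule sets_arrivals_in) (rule sets_in_pattern_after)
  then show ?thesis
    unfolding pattern_after_def mem_Collect_eq .
qed

lemma emeasure_in_pattern_after_ge:
  assumes "i < n" "D \<le> s" "0 < t" "t < 1"
  shows "exp_neg (cum_rate_on (lam i) (t * D) s) * emeasure M {\<omega> \<in> space M. in_pattern A i (\<alpha> i \<omega>)}
    \<le> emeasure M {\<omega> \<in> space M. in_pattern_after A s i (\<alpha> i \<omega>)}"
proof -
  have tD: "0 < t * D" "t * D < D"
    using assms D_pos by auto
  consider (small) "\<beta> i < D" | (early) "\<not> \<beta> i < D" "i \<in> A" | (late) "\<not> \<beta> i < D" "i \<notin> A"
    by blast
  then show ?thesis
  proof cases
    case small
    have "ennreal (t * D) < ennreal D"
      using tD by (simp add: ennreal_less_iff)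
    then have "{\<omega> \<in> space M. in_pattern A i (\<alpha> i \<omega>)} \<subseteq> {\<omega> \<in> space M. ennreal (t * D) < \<alpha> i \<omega>}"
      using small by (auto simp: in_pattern_def intro: less_le_trans)
    from exp_neg_mul_emeasure_le_arrival_after[OF \<open>i < n\<close> tD(1) _ order.refl this] tD \<open>D \<le> s\<close>
    show ?thesis
      using small by (simp add: in_pattern_after_def)
  next
    case early
    then show ?thesis
      using mult_right_mono[OF exp_neg_le_1] by (simp add: in_pattern_def in_pattern_after_def)
  next
    case late
    have "cum_rate_on (lam i) (\<beta> i) (max (\<beta> i) s) \<le> cum_rate_on (lam i) (t * D) s"
      using late tD by (cases "s \<le> \<beta> i") (auto simp: cum_rate_on_empty intro: cum_rate_on_mono)
    moreover have "{\<omega> \<in> space M. in_pattern A i (\<alpha> i \<omega>)} = {\<omega> \<in> space M. ennreal (\<beta> i) < \<alpha> i \<omega>}"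
      and after_eq: "{\<omega> \<in> space M. in_pattern_after A s i (\<alpha> i \<omega>)}
        = {\<omega> \<in> space M. ennreal (max (\<beta> i) s) < \<alpha> i \<omega>}"
      using late by (simp_all add: in_pattern_def in_pattern_after_def)
    ultimately show ?thesis
      unfolding after_eq using beta_pos[OF \<open>i < n\<close>]
      by (intro exp_neg_mul_emeasure_le_arrival_after \<open>i < n\<close>) auto
  qed
qed

lemma emeasure_pattern_eq_prod:
  "emeasure M (pattern A) = (\<Prod>i<n. emeasure M {\<omega> \<in> space M. in_pattern A i (\<alpha> i \<omega>)})"
proof -
  have "emeasure M {\<omega> \<in> space M. \<forall>i<n. \<alpha> i \<omega> \<in> {x. in_pattern A i x}}
      = (\<Prod>i<n. emeasure M {\<omega> \<in> space M. \<alpha> i \<omega> \<in> {x. in_pattern A i x}})"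
    by (rule emeasure_arrivals_in) (rule sets_in_pattern)
  then show ?thesis
    unfolding pattern_def mem_Collect_eq .
qed

lemma emeasure_pattern_after_eq_prod:
  "emeasure M (pattern_after A s) = (\<Prod>i<n. emeasure M {\<omega> \<in> space M. in_pattern_after A s i (\<alpha> i \<omega>)})"
proof -
  have "emeasure M {\<omega> \<in> space M. \<forall>i<n. \<alpha> i \<omega> \<in> {x. in_pattern_after A s i x}}
      = (\<Prod>i<n. emeasure M {\<omega> \<in> space M. \<alpha> i \<omega> \<in> {x. in_pattern_after A s i x}})"
    by (rule emeasure_arrivals_in) (rule sets_in_pattern_after)
  then show ?thesis
    unfolding pattern_after_def mem_Collect_eq .
qed

lemma emeasure_pattern_after_ge_scaled:
  assumes "D \<le> s" "0 < t" "t < 1"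
  shows "ennreal ((t * D / s)\<^sup>2) * emeasure M (pattern A) \<le> emeasure M (pattern_after A s)"
proof -
  have tD: "0 < t * D" "t * D \<le> s"
    using assms D_pos by (auto intro: order.trans[of _ D])
  have "(\<Sum>i<n. cum_rate_on (lam i) (t * D) s) \<le> ennreal (2 * ln s - 2 * ln (t * D))"
    using rate_fun_lam sum_rate_le tD by (intro sum_cum_rate_on_le_ln) (auto simp: rate_fun_def)
  then have "ennreal ((t * D / s)\<^sup>2) \<le> exp_neg (\<Sum>i<n. cum_rate_on (lam i) (t * D) s)"
    using tD by (rule exp_neg_ge_ratio_squared)
  then have "ennreal ((t * D / s)\<^sup>2) \<le> (\<Prod>i<n. exp_neg (cum_rate_on (lam i) (t * D) s))"
    by (simp add: exp_neg_sum)
  then have "ennreal ((t * D / s)\<^sup>2) * emeasure M (pattern A)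
      \<le> (\<Prod>i<n. exp_neg (cum_rate_on (lam i) (t * D) s)) * emeasure M (pattern A)"
    by (rule mult_right_mono) simp
  also have "\<dots> = (\<Prod>i<n. exp_neg (cum_rate_on (lam i) (t * D) s)
      * emeasure M {\<omega> \<in> space M. in_pattern A i (\<alpha> i \<omega>)})"
    unfolding emeasure_pattern_eq_prod by (rule prod.distrib[symmetric])
  also have "\<dots> \<le> (\<Prod>i<n. emeasure M {\<omega> \<in> space M. in_pattern_after A s i (\<alpha> i \<omega>)})"
    using assms by (intro prod_mono_ennreal emeasure_in_pattern_after_ge) auto
  also have "\<dots> = emeasure M (pattern_after A s)"
    by (rule emeasure_pattern_after_eq_prod[symmetric])
  finally show ?thesis .
qed

(* The detour through t < 1 is needed because on pattern A the boxes with beta_i < D only satisfy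
   alpha_i >= D, whereas the survival function controls alpha_i > t D. *)
lemma emeasure_pattern_after_ge:
  assumes "D \<le> s"
  shows "ennreal ((D / s)\<^sup>2) * emeasure M (pattern A) \<le> emeasure M (pattern_after A s)"
proof -
  obtain p where p: "emeasure M (pattern A) = ennreal p" "0 \<le> p"
    using emeasure_eq_measure[of "pattern A"] by auto
  obtain q where q: "emeasure M (pattern_after A s) = ennreal q" "0 \<le> q"
    using emeasure_eq_measure[of "pattern_after A s"] by auto
  have "(D / s)\<^sup>2 * p \<le> q"
  proof (rule field_le_mult_one_interval)
    fix z :: real assume z: "0 < z" "z < 1"
    have "ennreal ((sqrt z * D / s)\<^sup>2) * ennreal p \<le> ennreal q"
      using emeasure_pattern_after_ge_scaled[of s "sqrt z" A, OF assms] z p q by simp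
    then have "(sqrt z * D / s)\<^sup>2 * p \<le> q"
      using p q by (simp add: ennreal_mult[symmetric] del: ennreal_mult)
    then show "z * ((D / s)\<^sup>2 * p) \<le> q"
      using z by (simp add: power_mult_distrib power_divide mult.assoc)
  qed
  then show ?thesis
    using p q by (simp add: ennreal_mult[symmetric] del: ennreal_mult)
qed

definition large_boxes :: "nat set" where
  "large_boxes = {i. i < n \<and> D \<le> \<beta> i}"

definition beta_min :: "nat set \<Rightarrow> real" where
  "beta_min A = Min (\<beta> ` A)"

definition window :: "nat set \<Rightarrow> real set" where
  "window A = {s. D \<le> s \<and> (A = {} \<or> s < beta_min A)}"

lemma finite_large_boxes: "finite large_boxes"
  unfolding large_boxes_def by auto

lemma finite_subset_large_boxes: "A \<subseteq> large_boxes \<Longrightarrow> finite A"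
  by (rule finite_subset[OF _ finite_large_boxes])

lemma beta_min_le: "A \<subseteq> large_boxes \<Longrightarrow> i \<in> A \<Longrightarrow> beta_min A \<le> \<beta> i"
  unfolding beta_min_def by (simp add: finite_subset_large_boxes)

lemma beta_min_in: "A \<subseteq> large_boxes \<Longrightarrow> A \<noteq> {} \<Longrightarrow> beta_min A \<in> \<beta> ` A"
  unfolding beta_min_def by (intro Min_in) (simp_all add: finite_subset_large_boxes)

lemma threshold_le_beta_min:
  assumes "A \<subseteq> large_boxes" "A \<noteq> {}" shows "D \<le> beta_min A"
proof -
  obtain i where "i \<in> A" "beta_min A = \<beta> i"
    using beta_min_in[OF assms] by blast
  then show ?thesis
    using assms(1) by (auto simp: large_boxes_def)
qed

lemma window_eq: "window A = (if A = {} then {D..} else {D..<beta_min A})"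
  by (auto simp: window_def)

lemma nn_integral_window:
  assumes "A \<subseteq> large_boxes"
  shows "(\<integral>\<^sup>+ s. ennreal ((D / s)\<^sup>2) * indicator (window A) s \<partial>lborel)
    = ennreal (if A = {} then D else D - D\<^sup>2 / beta_min A)"
proof -
  have [measurable]: "(\<lambda>s::real. (D / s)\<^sup>2) \<in> borel_measurable borel"
    by measurable
  have deriv: "DERIV (\<lambda>s. - (D\<^sup>2 / s)) x :> (D / x)\<^sup>2" if "D \<le> x" for x
    using that D_pos by (auto intro!: derivative_eq_intros simp: power2_eq_square field_simps)
  show ?thesis
  proof (cases "A = {}")
    case True
    have "((\<lambda>s. - (D\<^sup>2 / s)) \<longlongrightarrow> 0) at_top"
      using tendsto_minus[OF tendsto_divide_0[OF tendsto_const
          filterlim_at_top_imp_at_infinity[OF filterlim_ident]], of "D\<^sup>2"]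
      by simp
    then have "(\<integral>\<^sup>+ s. ennreal ((D / s)\<^sup>2) * indicator {D..} s \<partial>lborel) = ennreal (0 - - (D\<^sup>2 / D))"
      using deriv by (intro nn_integral_FTC_atLeast) auto
    moreover have "window A = {D..}"
      using True by (simp add: window_eq)
    ultimately show ?thesis
      using True D_pos by (simp add: power2_eq_square)
  next
    case False
    have b: "D \<le> beta_min A"
      using threshold_le_beta_min[OF assms False] .
    have "AE s in lborel. ennreal ((D / s)\<^sup>2) * indicator (window A) s
        = ennreal ((D / s)\<^sup>2) * indicator {D..beta_min A} s"
      using AE_lborel_singleton[of "beta_min A"]
      by eventually_elim (auto simp: window_def False indicator_def)
    then have "(\<integral>\<^sup>+ s. ennreal ((D / s)\<^sup>2) * indicator (window A) s \<partial>lborel)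
        = (\<integral>\<^sup>+ s. ennreal ((D / s)\<^sup>2) * indicator {D..beta_min A} s \<partial>lborel)"
      by (rule nn_integral_cong_AE)
    also have "\<dots> = ennreal (- (D\<^sup>2 / beta_min A) - - (D\<^sup>2 / D))"
      using deriv b by (intro nn_integral_FTC_Icc) auto
    finally show ?thesis
      using False D_pos by (simp add: power2_eq_square)
  qed
qed

definition window_survival :: "nat set \<Rightarrow> 'a \<Rightarrow> ennreal" where
  "window_survival A \<omega> = (\<integral>\<^sup>+ s. indicator (window A) s * indicator (pattern_after A s) \<omega> \<partial>lborel)"

definition minorant :: "nat set \<Rightarrow> 'a \<Rightarrow> ennreal" where
  "minorant A \<omega> = ennreal D * indicator (pattern A) \<omega> + window_survival A \<omega>
     + (if A = {} then 0 else ennreal (beta_min A) * indicator (pattern_after A (beta_min A)) \<omega>)"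

lemma measurable_window_survival_integrand:
  "(\<lambda>(\<omega>, s). indicator (window A) s * indicator (pattern_after A s) \<omega> :: ennreal)
    \<in> borel_measurable (M \<Otimes>\<^sub>M lborel)"
proof -
  have [measurable]: "\<alpha> i \<in> borel_measurable M" if "i < n" for i
    using measurable_arrival that .
  have [measurable]: "window A \<in> sets borel"
    by (simp add: window_eq)
  have "{p \<in> space (M \<Otimes>\<^sub>M lborel). \<forall>i<n. in_pattern_after A (snd p) i (\<alpha> i (fst p))}
      \<in> sets (M \<Otimes>\<^sub>M lborel)"
    unfolding in_pattern_after_def by measurable
  then have "(\<lambda>p. indicator (window A) (snd p) * indicator
        {p \<in> space (M \<Otimes>\<^sub>M lborel). \<forall>i<n. in_pattern_after A (snd p) i (\<alpha> i (fst p))} p :: ennreal)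
      \<in> borel_measurable (M \<Otimes>\<^sub>M lborel)"
    by measurable
  then show ?thesis
    by (rule measurable_cong[THEN iffD1, rotated])
      (auto simp: space_pair_measure pattern_after_def indicator_def)
qed

lemma measurable_window_survival: "window_survival A \<in> borel_measurable M"
  unfolding window_survival_def
  using lborel.borel_measurable_nn_integral[OF measurable_window_survival_integrand] by simp

lemma nn_integral_window_survival:
  "(\<integral>\<^sup>+\<omega>. window_survival A \<omega> \<partial>M)
    = (\<integral>\<^sup>+ s. indicator (window A) s * emeasure M (pattern_after A s) \<partial>lborel)"
proof -
  interpret pair_sigma_finite M lborel ..
  have "(\<integral>\<^sup>+\<omega>. window_survival A \<omega> \<partial>M)
      = (\<integral>\<^sup>+ s. (\<integral>\<^sup>+\<omega>. indicator (window A) s * indicator (pattern_after A s) \<omega> \<partial>M) \<partial>lborel)"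
    unfolding window_survival_def
    using Fubini'[OF measurable_window_survival_integrand] by simp
  also have "\<dots> = (\<integral>\<^sup>+ s. indicator (window A) s * emeasure M (pattern_after A s) \<partial>lborel)"
    using sets_pattern_after by (simp add: nn_integral_cmult_indicator)
  finally show ?thesis .
qed

lemma nn_integral_minorant:
  "(\<integral>\<^sup>+\<omega>. minorant A \<omega> \<partial>M) = ennreal D * emeasure M (pattern A)
     + (\<integral>\<^sup>+ s. indicator (window A) s * emeasure M (pattern_after A s) \<partial>lborel)
     + (if A = {} then 0 else ennreal (beta_min A) * emeasure M (pattern_after A (beta_min A)))"
proof -
  have [measurable]: "pattern A \<in> sets M" "pattern_after A s \<in> sets M" for s
    by (simp_all add: sets_pattern sets_pattern_after)
  have [measurable]: "window_survival A \<in> borel_measurable M"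
    by (rule measurable_window_survival)
  show ?thesis
    unfolding minorant_def
    by (simp add: nn_integral_add nn_integral_cmult_indicator nn_integral_window_survival)
qed

lemma window_integral_le:
  assumes "A \<subseteq> large_boxes"
  shows "ennreal (if A = {} then D else D - D\<^sup>2 / beta_min A) * emeasure M (pattern A)
    \<le> (\<integral>\<^sup>+ s. indicator (window A) s * emeasure M (pattern_after A s) \<partial>lborel)"
proof -
  have [measurable]: "window A \<in> sets borel"
    by (simp add: window_eq)
  have "ennreal (if A = {} then D else D - D\<^sup>2 / beta_min A) * emeasure M (pattern A)
      = (\<integral>\<^sup>+ s. ennreal ((D / s)\<^sup>2) * indicator (window A) s * emeasure M (pattern A) \<partial>lborel)"
    unfolding nn_integral_window[OF assms, symmetric] by (rule nn_integral_multc[symmetric]) simp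
  also have "\<dots> \<le> (\<integral>\<^sup>+ s. indicator (window A) s * emeasure M (pattern_after A s) \<partial>lborel)"
  proof (intro nn_integral_mono)
    fix s
    show "ennreal ((D / s)\<^sup>2) * indicator (window A) s * emeasure M (pattern A)
        \<le> indicator (window A) s * emeasure M (pattern_after A s)"
      using emeasure_pattern_after_ge[of s A] by (cases "s \<in> window A") (auto simp: window_def)
  qed
  finally show ?thesis .
qed

lemma emeasure_pattern_after_ge_at:
  assumes "D \<le> b"
  shows "ennreal (D\<^sup>2 / b) * emeasure M (pattern A) \<le> ennreal b * emeasure M (pattern_after A b)"
proof -
  have "D\<^sup>2 / b = b * (D / b)\<^sup>2"
    using assms D_pos by (simp add: power2_eq_square field_simps)
  moreover have "ennreal (b * (D / b)\<^sup>2) = ennreal b * ennreal ((D / b)\<^sup>2)"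
    using assms D_pos by (intro ennreal_mult) auto
  ultimately have "ennreal (D\<^sup>2 / b) * emeasure M (pattern A)
      = ennreal b * (ennreal ((D / b)\<^sup>2) * emeasure M (pattern A))"
    by (simp only: mult.assoc)
  also have "\<dots> \<le> ennreal b * emeasure M (pattern_after A b)"
    using emeasure_pattern_after_ge[OF assms] by (rule mult_left_mono) simp
  finally show ?thesis .
qed

lemma twice_threshold_le_nn_integral_minorant:
  assumes "A \<subseteq> large_boxes"
  shows "ennreal (2 * D) * emeasure M (pattern A) \<le> (\<integral>\<^sup>+\<omega>. minorant A \<omega> \<partial>M)"
proof (cases "A = {}")
  case True
  have "ennreal (D + D) = ennreal D + ennreal D"
    using D_pos by (intro ennreal_plus) auto
  then have "ennreal (2 * D) * emeasure M (pattern A)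
      = ennreal D * emeasure M (pattern A) + ennreal D * emeasure M (pattern A)"
    by (simp only: mult_2 distrib_right)
  also have "\<dots> \<le> ennreal D * emeasure M (pattern A)
      + (\<integral>\<^sup>+ s. indicator (window A) s * emeasure M (pattern_after A s) \<partial>lborel)"
    using window_integral_le[OF assms] unfolding if_P[OF True] by (rule add_left_mono)
  also have "\<dots> = (\<integral>\<^sup>+\<omega>. minorant A \<omega> \<partial>M)"
    unfolding nn_integral_minorant if_P[OF True] by simp
  finally show ?thesis .
next
  case False
  define b where "b = beta_min A"
  have "D \<le> b"
    using threshold_le_beta_min[OF assms False] by (simp add: b_def)
  have "ennreal (2 * D) * emeasure M (pattern A) = ennreal D * emeasure M (pattern A)
      + ennreal (D - D\<^sup>2 / b) * emeasure M (pattern A) + ennreal (D\<^sup>2 / b) * emeasure M (pattern A)"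
    unfolding ennreal_twice_eq_split[OF D_pos \<open>D \<le> b\<close>] by (simp only: distrib_right)
  also have "\<dots> \<le> ennreal D * emeasure M (pattern A)
      + (\<integral>\<^sup>+ s. indicator (window A) s * emeasure M (pattern_after A s) \<partial>lborel)
      + ennreal b * emeasure M (pattern_after A b)"
    using window_integral_le[OF assms] emeasure_pattern_after_ge_at[OF \<open>D \<le> b\<close>]
    unfolding if_not_P[OF False] b_def[symmetric] by (intro add_mono order.refl)
  also have "\<dots> = (\<integral>\<^sup>+\<omega>. minorant A \<omega> \<partial>M)"
    unfolding nn_integral_minorant if_not_P[OF False] b_def ..
  finally show ?thesis .
qed

definition late_event :: "'a set" where
  "late_event = {\<omega> \<in> space M. \<forall>i<n. ennreal D \<le> box_time \<beta> (\<lambda>j. \<alpha> j \<omega>) i}"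

definition early_large :: "'a \<Rightarrow> nat set" where
  "early_large \<omega> = {i \<in> large_boxes. \<alpha> i \<omega> \<le> ennreal (\<beta> i)}"

lemma early_large_subset: "early_large \<omega> \<subseteq> large_boxes"
  by (auto simp: early_large_def)

lemma in_pattern_after_imp_in_pattern:
  assumes "D \<le> s" "in_pattern_after A s i x" shows "in_pattern A i x"
proof -
  have "ennreal D \<le> ennreal s" "ennreal (\<beta> i) \<le> ennreal (max (\<beta> i) s)"
    using assms(1) by (simp_all add: ennreal_leI)
  then show ?thesis
    using assms(2) unfolding in_pattern_def in_pattern_after_def
    by (metis less_imp_le order.trans order.strict_trans1)
qed

lemma pattern_after_subset_pattern: "D \<le> s \<Longrightarrow> pattern_after A s \<subseteq> pattern A"
  unfolding pattern_after_def pattern_def using in_pattern_after_imp_in_pattern by blast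

lemma pattern_unique:
  assumes "A \<subseteq> large_boxes" "\<omega> \<in> pattern A" shows "A = early_large \<omega>"
proof -
  have "in_pattern A i (\<alpha> i \<omega>)" if "i \<in> large_boxes" for i
    using assms(2) that by (simp add: pattern_def large_boxes_def)
  moreover have "\<not> \<beta> i < D" if "i \<in> large_boxes" for i
    using that by (simp add: large_boxes_def)
  ultimately have "i \<in> A \<longleftrightarrow> \<alpha> i \<omega> \<le> ennreal (\<beta> i)" if "i \<in> large_boxes" for i
    using that by (cases "i \<in> A") (auto simp: in_pattern_def not_le)
  then show ?thesis
    using assms(1) by (auto simp: early_large_def)
qed

lemma mem_pattern_early_large_iff:
  assumes "\<omega> \<in> space M" shows "\<omega> \<in> pattern (early_large \<omega>) \<longleftrightarrow> \<omega> \<in> late_event"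
proof -
  have "in_pattern (early_large \<omega>) i (\<alpha> i \<omega>) \<longleftrightarrow> ennreal D \<le> box_time \<beta> (\<lambda>j. \<alpha> j \<omega>) i"
    if "i < n" for i
  proof (cases "\<beta> i < D")
    case True
    then have "ennreal (\<beta> i) < ennreal D"
      using D_pos by (rule ennreal_lessI[rotated])
    then show ?thesis
      using True by (auto simp: in_pattern_def box_time_def le_max_iff_disj dest: leD)
  next
    case False
    then have "ennreal D \<le> ennreal (\<beta> i)" "i \<in> large_boxes"
      using that by (auto simp: large_boxes_def intro: ennreal_leI)
    then have "in_pattern (early_large \<omega>) i (\<alpha> i \<omega>)" "ennreal D \<le> box_time \<beta> (\<lambda>j. \<alpha> j \<omega>) i"
      using False by (auto simp: in_pattern_def early_large_def box_time_def le_max_iff_disj)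
    then show ?thesis
      by simp
  qed
  with assms show ?thesis
    by (auto simp: pattern_def late_event_def)
qed

lemma sum_Pow_large_boxes_eq:
  assumes "\<And>A. A \<subseteq> large_boxes \<Longrightarrow> A \<noteq> early_large \<omega> \<Longrightarrow> g A = 0"
  shows "(\<Sum>A\<in>Pow large_boxes. g A) = g (early_large \<omega>)"
proof -
  have "(\<Sum>A\<in>Pow large_boxes. g A) = g (early_large \<omega>) + (\<Sum>A\<in>Pow large_boxes - {early_large \<omega>}. g A)"
    using early_large_subset finite_large_boxes by (intro sum.remove) auto
  also have "(\<Sum>A\<in>Pow large_boxes - {early_large \<omega>}. g A) = 0"
    using assms by (intro sum.neutral) auto
  finally show ?thesis
    by simp
qed

lemma late_event_eq_Union: "late_event = (\<Union>A\<in>Pow large_boxes. pattern A)"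
proof (intro set_eqI iffI)
  fix \<omega> assume "\<omega> \<in> late_event"
  then have "\<omega> \<in> pattern (early_large \<omega>)"
    using mem_pattern_early_large_iff by (simp add: late_event_def)
  then show "\<omega> \<in> (\<Union>A\<in>Pow large_boxes. pattern A)"
    using early_large_subset by blast
next
  fix \<omega> assume "\<omega> \<in> (\<Union>A\<in>Pow large_boxes. pattern A)"
  then obtain A where A: "A \<subseteq> large_boxes" "\<omega> \<in> pattern A"
    by auto
  then have "\<omega> \<in> pattern (early_large \<omega>)" "\<omega> \<in> space M"
    unfolding pattern_unique[OF A, symmetric] by (simp_all add: pattern_def)
  then show "\<omega> \<in> late_event"
    using mem_pattern_early_large_iff by blast
qed

lemma sets_late_event: "late_event \<in> sets M"
  unfolding late_event_eq_Union by (rule sets.finite_UN) (simp add: finite_large_boxes, rule sets_pattern)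

lemma sum_indicator_pattern:
  assumes "\<omega> \<in> space M"
  shows "(\<Sum>A\<in>Pow large_boxes. indicator (pattern A) \<omega> :: ennreal) = indicator late_event \<omega>"
proof -
  have "(\<Sum>A\<in>Pow large_boxes. indicator (pattern A) \<omega> :: ennreal) = indicator (pattern (early_large \<omega>)) \<omega>"
    by (rule sum_Pow_large_boxes_eq) (auto simp: indicator_def dest: pattern_unique)
  also have "\<dots> = indicator late_event \<omega>"
    using mem_pattern_early_large_iff[OF assms] by (simp add: indicator_def)
  finally show ?thesis .
qed

lemma pattern_subset_late_event: "A \<subseteq> large_boxes \<Longrightarrow> pattern A \<subseteq> late_event"
  using late_event_eq_Union by blast

lemma less_box_time_of_pattern_after:
  assumes A: "A \<subseteq> large_boxes" and \<omega>: "\<omega> \<in> pattern_after A s" and s: "s \<in> window A"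
    and "i < n"
  shows "ennreal s < box_time \<beta> (\<lambda>j. \<alpha> j \<omega>) i"
proof -
  have mem: "in_pattern_after A s i (\<alpha> i \<omega>)"
    using \<omega> \<open>i < n\<close> by (simp add: pattern_after_def)
  have le_box_time: "\<alpha> i \<omega> \<le> box_time \<beta> (\<lambda>j. \<alpha> j \<omega>) i" "ennreal (\<beta> i) \<le> box_time \<beta> (\<lambda>j. \<alpha> j \<omega>) i"
    by (simp_all add: box_time_def)
  consider (small) "\<beta> i < D" | (early) "\<not> \<beta> i < D" "i \<in> A" | (late) "\<not> \<beta> i < D" "i \<notin> A"
    by blast
  then show ?thesis
  proof cases
    case small
    then show ?thesis
      using mem le_box_time(1) by (simp add: in_pattern_after_def less_le_trans)
  next
    case early
    then have "s < \<beta> i"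
      using s beta_min_le[OF A] by (force simp: window_def)
    then have "ennreal s < ennreal (\<beta> i)"
      using beta_pos \<open>i < n\<close> by (intro ennreal_lessI) auto
    then show ?thesis
      using le_box_time(2) by (rule less_le_trans)
  next
    case late
    have "ennreal s \<le> ennreal (max (\<beta> i) s)"
      by (intro ennreal_leI) simp
    also have "\<dots> < \<alpha> i \<omega>"
      using mem late by (simp add: in_pattern_after_def)
    finally show ?thesis
      using le_box_time(1) by (rule less_le_trans)
  qed
qed

lemma stop_box_mem_of_pattern_after:
  assumes A: "A \<subseteq> large_boxes" "A \<noteq> {}" and \<omega>: "\<omega> \<in> pattern_after A (beta_min A)"
  shows "stop_box n \<beta> (\<lambda>j. \<alpha> j \<omega>) \<in> A"
proof (rule ccontr)
  define k where "k = stop_box n \<beta> (\<lambda>j. \<alpha> j \<omega>)"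
  define b where "b = beta_min A"
  let ?\<tau> = "box_time \<beta> (\<lambda>j. \<alpha> j \<omega>)"
  assume "stop_box n \<beta> (\<lambda>j. \<alpha> j \<omega>) \<notin> A"
  then have "k \<notin> A" "k < n"
    using stop_box_less[OF n_ge_1] by (simp_all add: k_def)
  obtain j where j: "j \<in> A" "\<beta> j = b"
    using beta_min_in[OF A] by (auto simp: b_def)
  then have "j < n" "\<not> \<beta> j < D"
    using A(1) by (auto simp: large_boxes_def)
  moreover have "in_pattern_after A b j (\<alpha> j \<omega>)"
    using \<omega> \<open>j < n\<close> by (simp add: pattern_after_def b_def)
  ultimately have "\<alpha> j \<omega> \<le> ennreal (\<beta> j)"
    using j by (simp add: in_pattern_after_def)
  then have "?\<tau> j = ennreal b"
    using j by (simp add: box_time_def max_absorb2)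
  have "ennreal b < \<alpha> k \<omega>"
  proof (cases "\<beta> k < D")
    case True
    then show ?thesis
      using \<omega> \<open>k < n\<close> by (simp add: pattern_after_def in_pattern_after_def b_def)
  next
    case False
    have "ennreal b \<le> ennreal (max (\<beta> k) b)"
      by (intro ennreal_leI) simp
    also have "\<dots> < \<alpha> k \<omega>"
      using \<omega> \<open>k < n\<close> \<open>k \<notin> A\<close> False by (simp add: pattern_after_def in_pattern_after_def b_def)
    finally show ?thesis .
  qed
  also have "\<alpha> k \<omega> \<le> ?\<tau> k"
    by (simp add: box_time_def)
  also have "?\<tau> k \<le> ?\<tau> j"
    unfolding k_def using \<open>j < n\<close> by (rule box_time_stop_box_le)
  finally show False
    using \<open>?\<tau> j = ennreal b\<close> by simp
qed

lemma threshold_add_window_survival_le: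
  assumes A: "A \<subseteq> large_boxes" and \<omega>: "\<omega> \<in> pattern A"
  shows "ennreal D + window_survival A \<omega>
    \<le> box_time \<beta> (\<lambda>j. \<alpha> j \<omega>) (stop_box n \<beta> (\<lambda>j. \<alpha> j \<omega>))"
proof -
  define m where "m = box_time \<beta> (\<lambda>j. \<alpha> j \<omega>) (stop_box n \<beta> (\<lambda>j. \<alpha> j \<omega>))"
  have "ennreal D \<le> m"
    using pattern_subset_late_event[OF A] \<omega> stop_box_less[OF n_ge_1]
    by (auto simp: late_event_def m_def)
  have sets: "{s. D \<le> s \<and> ennreal s < m} \<in> sets borel"
  proof -
    have "{s. D \<le> s \<and> ennreal s < m} = {s \<in> space borel. D \<le> s \<and> ennreal s < m}"
      by simp
    also have "\<dots> \<in> sets borel"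
      by measurable
    finally show ?thesis .
  qed
  have "window_survival A \<omega> \<le> (\<integral>\<^sup>+ s. indicator {s. D \<le> s \<and> ennreal s < m} s \<partial>lborel)"
    unfolding window_survival_def
  proof (intro nn_integral_mono)
    fix s
    have "ennreal s < m" if "s \<in> window A" "\<omega> \<in> pattern_after A s"
      unfolding m_def using that stop_box_less[OF n_ge_1]
      by (intro less_box_time_of_pattern_after[OF A])
    then show "indicator (window A) s * indicator (pattern_after A s) \<omega>
        \<le> (indicator {s. D \<le> s \<and> ennreal s < m} s :: ennreal)"
      by (auto simp: indicator_def window_def)
  qed
  also have "\<dots> = emeasure lborel {s. D \<le> s \<and> ennreal s < m}"
    using sets by simp
  finally show ?thesis
    using ennreal_add_emeasure_Ico_le[OF \<open>ennreal D \<le> m\<close>] D_pos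
    unfolding m_def[symmetric] by (meson add_left_mono less_imp_le order.trans)
qed

lemma minorant_le_stop_Q:
  assumes A: "A \<subseteq> large_boxes" and \<omega>: "\<omega> \<in> pattern A"
  shows "minorant A \<omega> \<le> stop_Q n \<beta> (\<lambda>j. \<alpha> j \<omega>)"
proof -
  define k where "k = stop_box n \<beta> (\<lambda>j. \<alpha> j \<omega>)"
  have "(if A = {} then 0 else ennreal (beta_min A) * indicator (pattern_after A (beta_min A)) \<omega>)
      \<le> ennreal (\<beta> k)"
  proof (cases "A \<noteq> {} \<and> \<omega> \<in> pattern_after A (beta_min A)")
    case True
    then have "k \<in> A"
      unfolding k_def using stop_box_mem_of_pattern_after[OF A] by blast
    then show ?thesis
      using True beta_min_le[OF A] by (simp add: ennreal_leI)
  qed auto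
  with threshold_add_window_survival_le[OF assms] \<omega> show ?thesis
    unfolding minorant_def stop_Q_eq k_def[symmetric] by (simp add: add_mono)
qed

lemma minorant_eq_0:
  assumes A: "A \<subseteq> large_boxes" and \<omega>: "\<omega> \<notin> pattern A"
  shows "minorant A \<omega> = 0"
proof -
  have "\<omega> \<notin> pattern_after A s" if "D \<le> s" for s
    using pattern_after_subset_pattern[OF that] \<omega> by blast
  then have "indicator (window A) s * indicator (pattern_after A s) \<omega> = (0 :: ennreal)" for s
    by (cases "s \<in> window A") (auto simp: window_def)
  then have "window_survival A \<omega> = 0"
    by (simp only: window_survival_def) simp
  moreover have "\<omega> \<notin> pattern_after A (beta_min A)" if "A \<noteq> {}"
    using \<open>\<And>s. D \<le> s \<Longrightarrow> \<omega> \<notin> pattern_after A s\<close> threshold_le_beta_min[OF A that] .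
  ultimately show ?thesis
    using \<omega> by (simp add: minorant_def)
qed

lemma measurable_minorant: "minorant A \<in> borel_measurable M"
proof -
  have [measurable]: "pattern A \<in> sets M" "pattern_after A s \<in> sets M" for s
    by (simp_all add: sets_pattern sets_pattern_after)
  have [measurable]: "window_survival A \<in> borel_measurable M"
    by (rule measurable_window_survival)
  show ?thesis
    unfolding minorant_def[abs_def] by measurable
qed

lemma sum_minorant_le:
  assumes "\<omega> \<in> space M"
  shows "(\<Sum>A\<in>Pow large_boxes. minorant A \<omega>)
    \<le> stop_Q n \<beta> (\<lambda>j. \<alpha> j \<omega>) * indicator late_event \<omega>"
proof -
  have "(\<Sum>A\<in>Pow large_boxes. minorant A \<omega>) = minorant (early_large \<omega>) \<omega>"
    by (rule sum_Pow_large_boxes_eq) (use minorant_eq_0 pattern_unique in blast)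
  also have "\<dots> \<le> stop_Q n \<beta> (\<lambda>j. \<alpha> j \<omega>) * indicator late_event \<omega>"
    using minorant_le_stop_Q[OF early_large_subset] minorant_eq_0[OF early_large_subset]
      mem_pattern_early_large_iff[OF assms]
    by (cases "\<omega> \<in> late_event") auto
  finally show ?thesis .
qed

lemma twice_threshold_mul_late_event_le:
  "ennreal (2 * D) * emeasure M late_event
    \<le> (\<integral>\<^sup>+\<omega>. stop_Q n \<beta> (\<lambda>j. \<alpha> j \<omega>) * indicator late_event \<omega> \<partial>M)"
proof -
  have "emeasure M late_event = (\<integral>\<^sup>+\<omega>. (\<Sum>A\<in>Pow large_boxes. indicator (pattern A) \<omega>) \<partial>M)"
    using sets_late_event by (simp add: sum_indicator_pattern cong: nn_integral_cong)
  also have "\<dots> = (\<Sum>A\<in>Pow large_boxes. emeasure M (pattern A))"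
    using sets_pattern by (subst nn_integral_sum) auto
  finally have "ennreal (2 * D) * emeasure M late_event
      = (\<Sum>A\<in>Pow large_boxes. ennreal (2 * D) * emeasure M (pattern A))"
    by (simp add: sum_distrib_left)
  also have "\<dots> \<le> (\<Sum>A\<in>Pow large_boxes. (\<integral>\<^sup>+\<omega>. minorant A \<omega> \<partial>M))"
    by (intro sum_mono twice_threshold_le_nn_integral_minorant) simp
  also have "\<dots> = (\<integral>\<^sup>+\<omega>. (\<Sum>A\<in>Pow large_boxes. minorant A \<omega>) \<partial>M)"
    using measurable_minorant by (subst nn_integral_sum) auto
  also have "\<dots> \<le> (\<integral>\<^sup>+\<omega>. stop_Q n \<beta> (\<lambda>j. \<alpha> j \<omega>) * indicator late_event \<omega> \<partial>M)"
    by (intro nn_integral_mono sum_minorant_le)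
  finally show ?thesis .
qed

lemma nn_integral_stop_Q_capped_le_threshold:
  fixes y :: "nat \<Rightarrow> ennreal"
  assumes "j < n" "box_time \<beta> y j = ennreal D" and cap_le: "\<And>i. i < n \<Longrightarrow> ennreal D \<le> box_time \<beta> y i"
  shows "(\<integral>\<^sup>+\<omega>. stop_Q n \<beta> (\<lambda>i. min (\<alpha> i \<omega>) (y i)) \<partial>M)
    \<le> (\<integral>\<^sup>+\<omega>. stop_Q n \<beta> (\<lambda>i. \<alpha> i \<omega>) \<partial>M)"
proof (rule nn_integral_le_by_event)
  show "late_event \<in> sets M"
    by (rule sets_late_event)
  show "(\<lambda>\<omega>. stop_Q n \<beta> (\<lambda>i. \<alpha> i \<omega>)) \<in> borel_measurable M"
    using measurable_arrival n_ge_1 by (rule stop_Q_measurable)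
  show "stop_Q n \<beta> (\<lambda>i. min (\<alpha> i \<omega>) (y i)) \<le> stop_Q n \<beta> (\<lambda>i. \<alpha> i \<omega>)"
    if \<omega>: "\<omega> \<in> space M - late_event" for \<omega>
  proof -
    obtain i where "i < n" "box_time \<beta> (\<lambda>j. \<alpha> j \<omega>) i < ennreal D"
      using \<omega> by (auto simp: late_event_def not_le)
    then show ?thesis
      using cap_le by (subst stop_Q_min_eq) (auto intro: less_le_trans)
  qed
  show "stop_Q n \<beta> (\<lambda>i. min (\<alpha> i \<omega>) (y i)) \<le> ennreal (2 * D)" for \<omega>
  proof -
    have "stop_Q n \<beta> (\<lambda>i. min (\<alpha> i \<omega>) (y i)) \<le> 2 * box_time \<beta> (\<lambda>i. min (\<alpha> i \<omega>) (y i)) j"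
      using \<open>j < n\<close> by (rule stop_Q_le_box_time)
    also have "\<dots> \<le> 2 * ennreal D"
      using assms(2) by (simp add: box_time_min mult_left_mono)
    finally show ?thesis
      using D_pos by (simp add: ennreal_mult)
  qed
  show "ennreal (2 * D) * emeasure M late_event
      \<le> (\<integral>\<^sup>+\<omega>. stop_Q n \<beta> (\<lambda>i. \<alpha> i \<omega>) * indicator late_event \<omega> \<partial>M)"
    by (rule twice_threshold_mul_late_event_le)
qed

end

section \<open>Capping the arrival times\<close>

context arrival_model
begin

lemma nn_integral_stop_Q_capped_le:
  fixes y :: "nat \<Rightarrow> ennreal"
  shows "(\<integral>\<^sup>+\<omega>. stop_Q n \<beta> (\<lambda>i. min (\<alpha> i \<omega>) (y i)) \<partial>M)
    \<le> (\<integral>\<^sup>+\<omega>. stop_Q n \<beta> (\<lambda>i. \<alpha> i \<omega>) \<partial>M)"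
proof -
  define cap where "cap = Min (box_time \<beta> y ` {..<n})"
  have cap_le: "cap \<le> box_time \<beta> y i" if "i < n" for i
    unfolding cap_def using that by simp
  have "cap \<in> box_time \<beta> y ` {..<n}"
    unfolding cap_def using n_ge_1 by (intro Min_in) (auto simp: lessThan_empty_iff)
  then obtain j where j: "j < n" "cap = box_time \<beta> y j"
    by auto
  show ?thesis
  proof (cases "cap = \<top>")
    case True
    then have "y i = \<top>" if "i < n" for i
      using cap_le[OF that] by (auto simp: box_time_def top_unique max_def split: if_splits)
    then have "stop_Q n \<beta> (\<lambda>i. min (\<alpha> i \<omega>) (y i)) = stop_Q n \<beta> (\<lambda>i. \<alpha> i \<omega>)" for \<omega>
      using n_ge_1 by (intro stop_Q_cong) simp_all
    then show ?thesis
      by simp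
  next
    case False
    then obtain D where D: "cap = ennreal D" "0 \<le> D"
      by (cases cap rule: ennreal_cases) auto
    have "ennreal (\<beta> j) \<le> ennreal D"
      using j D by (simp add: box_time_def)
    then have "0 < D"
      using beta_pos[OF \<open>j < n\<close>] D(2) by (simp add: ennreal_le_iff)
    then interpret arrival_threshold M n \<beta> lam \<alpha> D
      by unfold_locales
    show ?thesis
      using j D cap_le by (intro nn_integral_stop_Q_capped_le_threshold[OF \<open>j < n\<close>]) auto
  qed
qed

lemma nn_integral_stop_Q_min_indep_le:
  assumes indep: "indep_var S G T Y"
    and arrival_eq: "\<And>i \<omega>. i < n \<Longrightarrow> \<alpha> i \<omega> = a i (G \<omega>)"
    and measurable_a: "\<And>i. i < n \<Longrightarrow> a i \<in> borel_measurable S"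
    and measurable_y: "\<And>i. i < n \<Longrightarrow> y i \<in> borel_measurable T"
  shows "(\<integral>\<^sup>+\<omega>. stop_Q n \<beta> (\<lambda>i. min (\<alpha> i \<omega>) (y i (Y \<omega>))) \<partial>M)
    \<le> (\<integral>\<^sup>+\<omega>. stop_Q n \<beta> (\<lambda>i. \<alpha> i \<omega>) \<partial>M)"
proof -
  define f where "f p = stop_Q n \<beta> (\<lambda>i. min (a i (fst p)) (y i (snd p)))" for p
  have f_eq: "f (G \<omega>, z) = stop_Q n \<beta> (\<lambda>i. min (\<alpha> i \<omega>) (y i z))" for \<omega> z
    unfolding f_def using arrival_eq n_ge_1 by (intro stop_Q_cong) auto
  have "(\<lambda>p. min (a i (fst p)) (y i (snd p))) \<in> borel_measurable (S \<Otimes>\<^sub>M T)" if "i < n" for i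
  proof -
    have [measurable]: "a i \<in> borel_measurable S" "y i \<in> borel_measurable T"
      using that measurable_a measurable_y by auto
    show ?thesis
      by measurable
  qed
  then have "f \<in> borel_measurable (S \<Otimes>\<^sub>M T)"
    unfolding f_def using n_ge_1 by (rule stop_Q_measurable)
  then have "(\<integral>\<^sup>+\<omega>. f (G \<omega>, Y \<omega>) \<partial>M) \<le> (\<integral>\<^sup>+\<omega>. stop_Q n \<beta> (\<lambda>i. \<alpha> i \<omega>) \<partial>M)"
    by (rule nn_integral_indep_var_le[OF indep]) (simp only: f_eq nn_integral_stop_Q_capped_le)
  then show ?thesis
    by (simp only: f_eq)
qed

end

theorem lemma4p7:
  fixes M :: "'a measure" and n :: nat
    and c v :: "nat \<Rightarrow> real"
    and lam_g lam_b :: "nat \<Rightarrow> real \<Rightarrow> real"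
    and \<alpha>g \<alpha>b :: "nat \<Rightarrow> 'a \<Rightarrow> ennreal"
  assumes "prob_space M"
    and "n \<ge> 1"
    and "\<forall>i<n. c i > 0"
    and "\<forall>i<n. v i \<ge> 0"
    and "\<forall>i<n. rate_fun (lam_g i) \<and> rate_fun (lam_b i)"
    and "\<forall>\<tau>>0. (\<Sum>i<n. lam_g i \<tau>) \<le> 2 / \<tau>"
    and "\<forall>i<n. first_arrival_time M (lam_g i) (\<alpha>g i) \<and> first_arrival_time M (lam_b i) (\<alpha>b i)"
    and "prob_space.indep_vars M (\<lambda>_. borel)
           (\<lambda>(bad, i). if bad then \<alpha>b i else \<alpha>g i) (UNIV \<times> {..<n})"
  shows "(\<integral>\<^sup>+ \<omega>. stop_Q n (\<lambda>i. c i + v i) (\<lambda>i. min (\<alpha>g i \<omega>) (\<alpha>b i \<omega>)) \<partial>M)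
         \<le> (\<integral>\<^sup>+ \<omega>. stop_Q n (\<lambda>i. c i + v i) (\<lambda>i. \<alpha>g i \<omega>) \<partial>M)"
proof -
  interpret prob_space M by fact
  define X where "X = (\<lambda>(bad, i). if bad then \<alpha>b i else \<alpha>g i)"
  have indep: "indep_vars (\<lambda>_. borel) X (UNIV \<times> {..<n})"
    using assms(8) by (simp add: X_def)
  have "indep_vars (\<lambda>_. borel) X ((\<lambda>i. (False, i)) ` {..<n})"
    by (rule indep_vars_subset[OF indep]) auto
  then have "indep_vars (\<lambda>_. borel) (\<lambda>i. X (False, i)) {..<n}"
    by (rule indep_vars_reindex) (simp add: inj_on_def)
  then interpret arrival_model M n "\<lambda>i. c i + v i" lam_g \<alpha>g
    using assms(2-7) by unfold_locales (simp_all add: X_def add_pos_nonneg)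
  let ?good = "\<lambda>\<omega>. restrict (\<lambda>j. X j \<omega>) ({False} \<times> {..<n})"
  let ?bad = "\<lambda>\<omega>. restrict (\<lambda>j. X j \<omega>) ({True} \<times> {..<n})"
  have "(\<integral>\<^sup>+ \<omega>. stop_Q n (\<lambda>i. c i + v i) (\<lambda>i. min (\<alpha>g i \<omega>) (\<alpha>b i \<omega>)) \<partial>M)
      = (\<integral>\<^sup>+ \<omega>. stop_Q n (\<lambda>i. c i + v i) (\<lambda>i. min (\<alpha>g i \<omega>) (?bad \<omega> (True, i))) \<partial>M)"
    using n_ge_1 by (intro nn_integral_cong stop_Q_cong) (auto simp: X_def)
  also have "\<dots> \<le> (\<integral>\<^sup>+ \<omega>. stop_Q n (\<lambda>i. c i + v i) (\<lambda>i. \<alpha>g i \<omega>) \<partial>M)"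
  proof (rule nn_integral_stop_Q_min_indep_le[where a = "\<lambda>i g. g (False, i)" and y = "\<lambda>i b. b (True, i)"])
    show "indep_var (PiM ({False} \<times> {..<n}) (\<lambda>_. borel)) ?good (PiM ({True} \<times> {..<n}) (\<lambda>_. borel)) ?bad"
      by (rule indep_var_restrict[OF indep]) auto
    show "\<alpha>g i \<omega> = ?good \<omega> (False, i)" if "i < n" for i \<omega>
      using that by (simp add: X_def)
    show "(\<lambda>g. g (False, i)) \<in> borel_measurable (PiM ({False} \<times> {..<n}) (\<lambda>_. borel))" if "i < n" for i
      using that by (intro measurable_component_singleton) simp
    show "(\<lambda>b. b (True, i)) \<in> borel_measurable (PiM ({True} \<times> {..<n}) (\<lambda>_. borel))" if "i < n" for i
      using that by (intro measurable_component_singleton) simp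
  qed
  finally show ?thesis .
qed

end
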